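(* Let $F_1,\dots,F_n:\mathbb{R}^d\to\mathbb{R}^d$ with each $F_i$ being $L_i$-Lipschitz, $F=\frac1n\sum_iF_i$, $F(x^* )=0$. Let $v\in\mathbb{R}^n_+$ be a random vector with $\mathbb{E}[v_i]=1$ and $\mathbb{E}[v_i^2]<\infty$ for all $i$, and $F_v(x)=\frac1n\sum_iv_iF_i(x)$. Then for all $x\in\mathbb{R}^d$, $$\mathbb{E}\|(F_v(x)-F_v(x^* ))-(F(x)-F(x^* ))\|^2\le\frac\delta2\|x-x^*\|^2\quad\text{with}\quad\delta=\frac2n\sum_{i=1}^nL_i^2\,\mathbb{E}(v_i^2).$$ If in addition $F$ is $\mu$-quasi strongly monotone, then the same inequality holds with $\delta=\frac2n\sum_{i=1}^nL_i^2\,\mathbb{E}(v_i^2)-2\mu^2$.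
   Context: $L_i$-Lipschitz: $\|F_i(x)-F_i(y)\|\le L_i\|x-y\|$. $\mu$-quasi strongly monotone ($\mu>0$): $\langle F(x),x-x^*\rangle\ge\mu\|x-x^*\|^2$ for all $x$. *)

theory Defs
  imports "HOL-Analysis.Analysis" "HOL-Probability.Probability"
begin

definition quasi_strongly_monotone :: "real \<Rightarrow> ('a::real_inner \<Rightarrow> 'a) \<Rightarrow> 'a \<Rightarrow> bool" where
  "quasi_strongly_monotone \<mu> F xs \<longleftrightarrow> (\<forall>x. inner (F x) (x - xs) \<ge> \<mu> * (norm (x - xs))\<^sup>2)"

end

theory Submission imports Defs begin

text \<open>
  With \<open>a\<^sub>i = F\<^sub>i x - F\<^sub>i x\<^sup>*\<close>, the random vector \<open>F\<^sub>v x - F\<^sub>v x\<^sup>*\<close> equals \<open>(1/n) \<Sum> v\<^sub>i a\<^sub>i\<close>, whose mean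
  is \<open>F x - F x\<^sup>* = F x\<close> because \<open>E v\<^sub>i = 1\<close>. Its second moment about the mean is therefore
  \<open>E \<parallel>(1/n) \<Sum> v\<^sub>i a\<^sub>i\<parallel>\<^sup>2 - \<parallel>F x\<parallel>\<^sup>2\<close>, and by convexity of the squared norm and the Lipschitz bounds
  \<open>E \<parallel>(1/n) \<Sum> v\<^sub>i a\<^sub>i\<parallel>\<^sup>2 \<le> (1/n) \<Sum> L\<^sub>i\<^sup>2 E v\<^sub>i\<^sup>2 \<parallel>x - x\<^sup>*\<parallel>\<^sup>2\<close>. Dropping \<open>-\<parallel>F x\<parallel>\<^sup>2\<close> gives the first
  bound; under quasi strong monotonicity, Cauchy-Schwarz gives \<open>\<parallel>F x\<parallel> \<ge> \<mu> \<parallel>x - x\<^sup>*\<parallel>\<close>, which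
  gives the second.
\<close>

lemma norm_average_sq_le:
  fixes b :: "nat \<Rightarrow> 'a::real_normed_vector"
  shows "(norm ((1 / real n) *\<^sub>R (\<Sum>i<n. b i)))\<^sup>2 \<le> (1 / real n) * (\<Sum>i<n. (norm (b i))\<^sup>2)"
proof -
  have "(norm (\<Sum>i<n. b i))\<^sup>2 \<le> (\<Sum>i<n. norm (b i))\<^sup>2"
    by (simp add: norm_sum power_mono)
  also have "\<dots> \<le> real n * (\<Sum>i<n. (norm (b i))\<^sup>2)"
    using Cauchy_Schwarz_ineq_sum[of "\<lambda>_. 1" "\<lambda>i. norm (b i)" "{..<n}"] by simp
  finally have "(norm (\<Sum>i<n. b i))\<^sup>2 / (real n)\<^sup>2 \<le> real n * (\<Sum>i<n. (norm (b i))\<^sup>2) / (real n)\<^sup>2"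
    by (rule divide_right_mono) simp
  then show ?thesis
    by (cases "n = 0") (simp_all add: power_divide power2_eq_square)
qed

lemma lipschitz_on_norm_diff_sq_le:
  fixes f :: "'a::real_normed_vector \<Rightarrow> 'b::real_normed_vector"
  assumes "lipschitz_on L S f" "x \<in> S" "y \<in> S"
  shows "(norm (f x - f y))\<^sup>2 \<le> L\<^sup>2 * (norm (x - y))\<^sup>2"
proof -
  have "norm (f x - f y) \<le> L * norm (x - y)"
    using lipschitz_onD[OF assms] by (simp add: dist_norm)
  then have "(norm (f x - f y))\<^sup>2 \<le> (L * norm (x - y))\<^sup>2"
    by (rule power_mono) simp
  then show ?thesis
    by (simp add: power_mult_distrib)
qed

lemma quasi_strongly_monotone_norm_sq_ge:
  assumes "quasi_strongly_monotone \<mu> F xs" "0 \<le> \<mu>"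
  shows "\<mu>\<^sup>2 * (norm (x - xs))\<^sup>2 \<le> (norm (F x))\<^sup>2"
proof -
  have "\<mu> * (norm (x - xs))\<^sup>2 \<le> inner (F x) (x - xs)"
    using assms(1) unfolding quasi_strongly_monotone_def by blast
  also have "\<dots> \<le> norm (F x) * norm (x - xs)"
    by (rule norm_cauchy_schwarz)
  finally have "\<mu> * norm (x - xs) \<le> norm (F x)"
    by (cases "x = xs") (simp_all add: power2_eq_square)
  then have "(\<mu> * norm (x - xs))\<^sup>2 \<le> (norm (F x))\<^sup>2"
    by (rule power_mono) (simp add: assms(2))
  then show ?thesis
    by (simp add: power_mult_distrib)
qed

context prob_space
begin

lemma expectation_norm_sq_centered:
  fixes X :: "'a \<Rightarrow> 'b::{real_inner, banach, second_countable_topology}"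
  assumes "integrable M X" "integrable M (\<lambda>\<omega>. (norm (X \<omega>))\<^sup>2)"
  shows "expectation (\<lambda>\<omega>. (norm (X \<omega> - expectation X))\<^sup>2)
    = expectation (\<lambda>\<omega>. (norm (X \<omega>))\<^sup>2) - (norm (expectation X))\<^sup>2"
proof -
  define m where "m = expectation X"
  have "(norm (X \<omega> - m))\<^sup>2 = (norm (X \<omega>))\<^sup>2 - 2 * inner (X \<omega>) m + (norm m)\<^sup>2" for \<omega>
    by (simp add: power2_norm_eq_inner inner_diff_left inner_diff_right inner_commute)
  then have "expectation (\<lambda>\<omega>. (norm (X \<omega> - m))\<^sup>2)
      = expectation (\<lambda>\<omega>. (norm (X \<omega>))\<^sup>2) - 2 * inner m m + (norm m)\<^sup>2"
    using assms by (simp add: m_def prob_space)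
  then show ?thesis
    by (simp add: m_def power2_norm_eq_inner)
qed

lemma expectation_reweighted_average_deviation_le:
  fixes a :: "nat \<Rightarrow> 'b::{real_inner, banach, second_countable_topology}"
  assumes mean1: "\<And>i. i < n \<Longrightarrow> integrable M (\<lambda>\<omega>. v \<omega> i) \<and> expectation (\<lambda>\<omega>. v \<omega> i) = 1"
    and sq: "\<And>i. i < n \<Longrightarrow> integrable M (\<lambda>\<omega>. (v \<omega> i)\<^sup>2)"
    and bound: "\<And>i. i < n \<Longrightarrow> (norm (a i))\<^sup>2 \<le> c i"
  shows "expectation (\<lambda>\<omega>. (norm ((1 / real n) *\<^sub>R (\<Sum>i<n. v \<omega> i *\<^sub>R a i)
                                   - (1 / real n) *\<^sub>R (\<Sum>i<n. a i)))\<^sup>2)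
    \<le> (1 / real n) * (\<Sum>i<n. c i * expectation (\<lambda>\<omega>. (v \<omega> i)\<^sup>2))
       - (norm ((1 / real n) *\<^sub>R (\<Sum>i<n. a i)))\<^sup>2"
proof -
  define X where "X \<omega> = (1 / real n) *\<^sub>R (\<Sum>i<n. v \<omega> i *\<^sub>R a i)" for \<omega>
  define B where "B \<omega> = (1 / real n) * (\<Sum>i<n. c i * (v \<omega> i)\<^sup>2)" for \<omega>
  have X_int: "integrable M X"
    unfolding X_def using mean1
    by (intro integrable_scaleR_right Bochner_Integration.integrable_sum integrable_scaleR_left) simp
  have X_mean: "expectation X = (1 / real n) *\<^sub>R (\<Sum>i<n. a i)"
    unfolding X_def using mean1 by (simp add: integral_sum)
  have B_int: "integrable M B"
    unfolding B_def using sq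
    by (intro integrable_mult_right Bochner_Integration.integrable_sum) simp
  have X_le_B: "(norm (X \<omega>))\<^sup>2 \<le> B \<omega>" for \<omega>
  proof -
    have "(norm (v \<omega> i *\<^sub>R a i))\<^sup>2 \<le> c i * (v \<omega> i)\<^sup>2" if "i < n" for i
      using mult_left_mono[OF bound[OF that], of "(v \<omega> i)\<^sup>2"]
      by (simp add: power_mult_distrib mult.commute)
    then have "(1 / real n) * (\<Sum>i<n. (norm (v \<omega> i *\<^sub>R a i))\<^sup>2) \<le> B \<omega>"
      unfolding B_def by (intro mult_left_mono sum_mono) auto
    then show ?thesis
      unfolding X_def by (rule order_trans[OF norm_average_sq_le])
  qed
  have X_sq_int: "integrable M (\<lambda>\<omega>. (norm (X \<omega>))\<^sup>2)"
  proof (rule Bochner_Integration.integrable_bound[OF B_int])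
    show "(\<lambda>\<omega>. (norm (X \<omega>))\<^sup>2) \<in> borel_measurable M"
      using X_int by measurable
    show "AE \<omega> in M. norm ((norm (X \<omega>))\<^sup>2) \<le> norm (B \<omega>)"
      using X_le_B by (auto intro!: AE_I2 order_trans[OF _ abs_ge_self])
  qed
  have "expectation (\<lambda>\<omega>. (norm (X \<omega> - expectation X))\<^sup>2)
      = expectation (\<lambda>\<omega>. (norm (X \<omega>))\<^sup>2) - (norm (expectation X))\<^sup>2"
    by (rule expectation_norm_sq_centered[OF X_int X_sq_int])
  also have "\<dots> \<le> expectation B - (norm (expectation X))\<^sup>2"
    using integral_mono[OF X_sq_int B_int X_le_B] by simp
  also have "expectation B = (1 / real n) * (\<Sum>i<n. c i * expectation (\<lambda>\<omega>. (v \<omega> i)\<^sup>2))"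
    unfolding B_def using sq by (simp add: integral_sum)
  finally show ?thesis
    unfolding X_mean by (simp add: X_def)
qed

end

theorem propositionD1:
  fixes M :: "'w measure"
    and n :: nat
    and Fs :: "nat \<Rightarrow> 'a::euclidean_space \<Rightarrow> 'a"
    and L :: "nat \<Rightarrow> real"
    and v :: "'w \<Rightarrow> nat \<Rightarrow> real"
    and xs :: 'a
    and \<mu> :: real
  defines "F \<equiv> (\<lambda>x. (1 / real n) *\<^sub>R (\<Sum>i<n. Fs i x))"
  defines "Fv \<equiv> (\<lambda>\<omega> x. (1 / real n) *\<^sub>R (\<Sum>i<n. v \<omega> i *\<^sub>R Fs i x))"
  assumes "prob_space M"
    and "n > 0"
    and lip: "\<And>i. i < n \<Longrightarrow> lipschitz_on (L i) UNIV (Fs i)"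
    and root: "F xs = 0"
    and meas: "\<And>i. i < n \<Longrightarrow> (\<lambda>\<omega>. v \<omega> i) \<in> borel_measurable M"
    and nonneg: "\<And>i \<omega>. i < n \<Longrightarrow> \<omega> \<in> space M \<Longrightarrow> v \<omega> i \<ge> 0"
    and mean1: "\<And>i. i < n \<Longrightarrow> integrable M (\<lambda>\<omega>. v \<omega> i) \<and> (\<integral>\<omega>. v \<omega> i \<partial>M) = 1"
    and sq: "\<And>i. i < n \<Longrightarrow> integrable M (\<lambda>\<omega>. (v \<omega> i)\<^sup>2)"
  shows "(\<forall>x. (\<integral>\<omega>. (norm ((Fv \<omega> x - Fv \<omega> xs) - (F x - F xs)))\<^sup>2 \<partial>M)
            \<le> ((2 / real n) * (\<Sum>i<n. (L i)\<^sup>2 * (\<integral>\<omega>. (v \<omega> i)\<^sup>2 \<partial>M))) / 2 * (norm (x - xs))\<^sup>2)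
     \<and> (\<mu> > 0 \<and> quasi_strongly_monotone \<mu> F xs \<longrightarrow>
        (\<forall>x. (\<integral>\<omega>. (norm ((Fv \<omega> x - Fv \<omega> xs) - (F x - F xs)))\<^sup>2 \<partial>M)
            \<le> ((2 / real n) * (\<Sum>i<n. (L i)\<^sup>2 * (\<integral>\<omega>. (v \<omega> i)\<^sup>2 \<partial>M)) - 2 * \<mu>\<^sup>2) / 2
               * (norm (x - xs))\<^sup>2))"
proof -
  have deviation_le: "(\<integral>\<omega>. (norm ((Fv \<omega> x - Fv \<omega> xs) - (F x - F xs)))\<^sup>2 \<partial>M)
     \<le> ((2 / real n) * (\<Sum>i<n. (L i)\<^sup>2 * (\<integral>\<omega>. (v \<omega> i)\<^sup>2 \<partial>M))) / 2 * (norm (x - xs))\<^sup>2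
        - (norm (F x))\<^sup>2" for x
  proof -
    have Fv_diff: "Fv \<omega> x - Fv \<omega> xs = (1 / real n) *\<^sub>R (\<Sum>i<n. v \<omega> i *\<^sub>R (Fs i x - Fs i xs))"
      for \<omega>
      unfolding Fv_def by (simp add: scaleR_diff_right sum_subtractf)
    have F_diff: "F x - F xs = (1 / real n) *\<^sub>R (\<Sum>i<n. Fs i x - Fs i xs)"
      unfolding F_def by (simp add: scaleR_diff_right sum_subtractf)
    have "(\<integral>\<omega>. (norm ((Fv \<omega> x - Fv \<omega> xs) - (F x - F xs)))\<^sup>2 \<partial>M)
      \<le> (1 / real n) * (\<Sum>i<n. ((L i)\<^sup>2 * (norm (x - xs))\<^sup>2) * (\<integral>\<omega>. (v \<omega> i)\<^sup>2 \<partial>M))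
         - (norm (F x - F xs))\<^sup>2"
      unfolding Fv_diff F_diff
      by (rule prob_space.expectation_reweighted_average_deviation_le[OF \<open>prob_space M\<close> mean1 sq
            lipschitz_on_norm_diff_sq_le[OF lip UNIV_I UNIV_I]])
    also have "(1 / real n) * (\<Sum>i<n. ((L i)\<^sup>2 * (norm (x - xs))\<^sup>2) * (\<integral>\<omega>. (v \<omega> i)\<^sup>2 \<partial>M))
       = ((2 / real n) * (\<Sum>i<n. (L i)\<^sup>2 * (\<integral>\<omega>. (v \<omega> i)\<^sup>2 \<partial>M))) / 2 * (norm (x - xs))\<^sup>2"
      by (simp add: sum_distrib_left ac_simps)
    finally show ?thesis
      using root by simp
  qed
  have shift: "(a - 2 * \<mu>\<^sup>2) / 2 * b = a / 2 * b - \<mu>\<^sup>2 * b" for a b :: real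
    by (simp add: field_simps)
  have bound: "\<mu>\<^sup>2 * (norm (x - xs))\<^sup>2 \<le> (norm (F x))\<^sup>2" if "\<mu> > 0" "quasi_strongly_monotone \<mu> F xs" for x
    using quasi_strongly_monotone_norm_sq_ge[OF that(2)] that(1) by simp
  show ?thesis
    using deviation_le bound unfolding shift by (smt (verit) zero_le_power2)
qed

end
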